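(* Let $X=\{(x_1,y_1),\dots,(x_m,y_m)\}$ be a finite subset of $\mathbb R^2$ with at least two points, let $\gamma=\min\{d(x,y):x\neq y\in X\}$, let $n$ be a positive integer, and let $P=\{\text{left-}r,\ \text{right-}r: r=\gamma,2\gamma,\dots,2n\gamma\}$. Equip each point $x\in X$ with the neighborhoods $L(r,x)$ of type left-$r$ and $R(r,x)$ of type right-$r$ for $r\in\{\gamma,2\gamma,\dots,2n\gamma\}$. If $2n\gamma\geq\max\{d(x,y):x\neq y\in X\}$ and the resulting typed space is symmetrically typed, then $X$ lies on a vertical line, i.e. there is a constant $a$ with $x_i=a$ for all $i\leq m$.
   Context: $d$ is Euclidean distance. For $x=(a,b)\in X$ and $r>0$: $L(r,x)=\{y=(c,e)\in X: d(x,y)\leq r,\ c\leq a\}$ and $R(r,x)=\{y=(c,e)\in X: d(x,y)\leq r,\ c\geq a\}$. In the resulting typed space (with the discrete topology on $X$), the type-$p$ neighborhoods of $x$ are: $L(r,x)$ for $p=\text{left-}r$, and $R(r,x)$ for $p=\text{right-}r$. For a type $p$, the space is $p$-symmetrically typed if for any $x,y\in X$ such that $y\notin U$ for some type-$p$ neighborhood $U$ of $x$, there exists a type-$p$ neighborhood $V$ of $y$ with $x\notin V$. The space is symmetrically typed if it is $p$-symmetrically typed for every type $p\in P$. *)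

theory Defs
  imports Complex_Main
begin

type_synonym point = "real \<times> real"

definition d :: "point \<Rightarrow> point \<Rightarrow> real" where
  "d x y = sqrt ((fst x - fst y)^2 + (snd x - snd y)^2)"

definition Lnb :: "point set \<Rightarrow> real \<Rightarrow> point \<Rightarrow> point set" where
  "Lnb X r x = {y \<in> X. d x y \<le> r \<and> fst y \<le> fst x}"

definition Rnb :: "point set \<Rightarrow> real \<Rightarrow> point \<Rightarrow> point set" where
  "Rnb X r x = {y \<in> X. d x y \<le> r \<and> fst y \<ge> fst x}"

datatype nbtype = LeftT real | RightT real

fun type_nbhds :: "point set \<Rightarrow> nbtype \<Rightarrow> point \<Rightarrow> point set set" where
  "type_nbhds X (LeftT r) x = {Lnb X r x}"
| "type_nbhds X (RightT r) x = {Rnb X r x}"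

definition p_symmetrically_typed ::
  "'a set \<Rightarrow> ('t \<Rightarrow> 'a \<Rightarrow> 'a set set) \<Rightarrow> 't \<Rightarrow> bool" where
  "p_symmetrically_typed X N p \<longleftrightarrow>
     (\<forall>x\<in>X. \<forall>y\<in>X. (\<exists>U\<in>N p x. y \<notin> U) \<longrightarrow> (\<exists>V\<in>N p y. x \<notin> V))"

definition symmetrically_typed ::
  "'a set \<Rightarrow> 't set \<Rightarrow> ('t \<Rightarrow> 'a \<Rightarrow> 'a set set) \<Rightarrow> bool" where
  "symmetrically_typed X P N \<longleftrightarrow> (\<forall>p\<in>P. p_symmetrically_typed X N p)"

definition min_dist :: "point set \<Rightarrow> real" where
  "min_dist X = Min {d x y | x y. x \<in> X \<and> y \<in> X \<and> x \<noteq> y}"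

definition max_dist :: "point set \<Rightarrow> real" where
  "max_dist X = Max {d x y | x y. x \<in> X \<and> y \<in> X \<and> x \<noteq> y}"

definition type_set :: "real \<Rightarrow> nat \<Rightarrow> nbtype set" where
  "type_set \<gamma> n = {LeftT (real k * \<gamma>) | k. k \<in> {1..2*n}}
                  \<union> {RightT (real k * \<gamma>) | k. k \<in> {1..2*n}}"

end

theory Submission
  imports Defs
begin

text \<open>Since \<open>r\<close> is at
  least the diameter of \<open>X\<close>, the neighborhood \<open>R(r,x)\<close> consists of all points of \<open>X\<close> not to
  the left of \<open>x\<close>. If \<open>x\<close> lay strictly left of \<open>y\<close>, then \<open>x \<notin> R(r,y)\<close>, so symmetry would
  give \<open>y \<notin> R(r,x)\<close>, which is absurd.\<close>

lemma finite_pairwise_distances: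
  assumes "finite X"
  shows "finite {d x y | x y. x \<in> X \<and> y \<in> X \<and> x \<noteq> y}"
proof -
  have "{d x y | x y. x \<in> X \<and> y \<in> X \<and> x \<noteq> y} \<subseteq> (\<lambda>(x, y). d x y) ` (X \<times> X)"
    by auto
  then show ?thesis
    using assms finite_subset by blast
qed

lemma d_le_max_dist:
  assumes "finite X" and "x \<in> X" and "y \<in> X" and "x \<noteq> y"
  shows "d x y \<le> max_dist X"
  unfolding max_dist_def
  using finite_pairwise_distances[OF assms(1)] assms(2-4) by (intro Max_ge) blast+

lemma RightT_mem_type_set:
  assumes "k \<in> {1..2*n}"
  shows "RightT (real k * \<gamma>) \<in> type_set \<gamma> n"
  using assms unfolding type_set_def by blast

lemma same_fst_if_right_symmetric:
  assumes sym: "p_symmetrically_typed X (type_nbhds X) (RightT r)"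
    and bounded: "\<And>x y. x \<in> X \<Longrightarrow> y \<in> X \<Longrightarrow> x \<noteq> y \<Longrightarrow> d x y \<le> r"
    and "x \<in> X" and "y \<in> X"
  shows "fst x = fst y"
proof -
  have not_left: "\<not> fst u < fst v" if "u \<in> X" "v \<in> X" for u v
  proof
    assume lt: "fst u < fst v"
    then have "u \<notin> Rnb X r v"
      unfolding Rnb_def by auto
    then have "\<exists>V\<in>type_nbhds X (RightT r) u. v \<notin> V"
      using sym that unfolding p_symmetrically_typed_def by auto
    then have "v \<notin> Rnb X r u"
      by simp
    moreover have "v \<in> Rnb X r u"
      using bounded[OF that] that lt unfolding Rnb_def by auto
    ultimately show False
      by blast
  qed
  show ?thesis
    using not_left[of x y] not_left[of y x] assms(3,4) by linarith
qed

theorem theorem5p5: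
  fixes X :: "point set" and n :: nat
  assumes "finite X" and "card X \<ge> 2" and "n \<ge> 1"
    and "2 * real n * min_dist X \<ge> max_dist X"
    and "symmetrically_typed X (type_set (min_dist X) n) (type_nbhds X)"
  shows "\<exists>a. \<forall>x\<in>X. fst x = a"
proof -
  define r where "r = real (2*n) * min_dist X"
  have "RightT r \<in> type_set (min_dist X) n"
    unfolding r_def using assms(3) by (intro RightT_mem_type_set) simp
  then have sym: "p_symmetrically_typed X (type_nbhds X) (RightT r)"
    using assms(5) unfolding symmetrically_typed_def by blast
  have bounded: "d x y \<le> r" if "x \<in> X" "y \<in> X" "x \<noteq> y" for x y
    using d_le_max_dist[OF assms(1) that] assms(4) unfolding r_def by simp
  have "X \<noteq> {}"
    using assms(2) by auto
  then obtain z where "z \<in> X"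
    by blast
  then show ?thesis
    using same_fst_if_right_symmetric[OF sym bounded] by blast
qed

end
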